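(* Suppose $x\in[1,2]^6$. Then $\frac{\partial\phi}{\partial x_j}(x)\ge0$ for each $j\in\{2,3,5,6\}$. In particular, for all $k_j\in[x_j,2]$, $j\in\{2,3,5,6\}$, $$\phi(x_1,x_2,x_3,x_4,x_5,x_6)\le\phi(x_1,k_2,k_3,x_4,k_5,k_6).$$
   Context: For $x=(x_1,\dots,x_6)\in\mathbb{R}^6_{\ge1}$ define $$\phi(x)=\frac{x_2x_3+x_5x_6+x_1x_2x_5+x_1x_3x_6-x_1^2x_4+x_4}{\sqrt{2x_1x_2x_6+x_1^2+x_2^2+x_6^2-1}\sqrt{2x_1x_3x_5+x_1^2+x_3^2+x_5^2-1}}.$$ *)

theory Defs
  imports Complex_Main
begin

definition phi :: "real \<Rightarrow> real \<Rightarrow> real \<Rightarrow> real \<Rightarrow> real \<Rightarrow> real \<Rightarrow> real" where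
  "phi x1 x2 x3 x4 x5 x6 =
     (x2*x3 + x5*x6 + x1*x2*x5 + x1*x3*x6 - x1^2*x4 + x4) /
     (sqrt (2*x1*x2*x6 + x1^2 + x2^2 + x6^2 - 1) * sqrt (2*x1*x3*x5 + x1^2 + x3^2 + x5^2 - 1))"

end

theory Submission
  imports Defs
begin

text \<open>As a function of \<open>x2\<close> alone, \<open>phi\<close> has the form \<open>(p t + q) / (c sqrt (t\<^sup>2 + 2 r t + s))\<close>,
whose derivative has the affine numerator \<open>(p r - q) t + p s - q r\<close>. For \<open>phi\<close> this numerator
factors as \<open>(x1\<^sup>2 - 1) (x5 (x2 x6 + x1) + x4 (x1 x6 + x2) - x3 (x6\<^sup>2 - 1))\<close>; on \<open>[1,2]\<^sup>6\<close> each of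
the first two summands is at least \<open>x6 + 1\<close> and the last is at most \<open>2 (x6 + 1)\<close>.
The symmetries \<open>(x2 x3)(x5 x6)\<close> and \<open>(x2 x6)(x3 x5)\<close> of \<open>phi\<close> carry this over to \<open>x3\<close>, \<open>x5\<close>
and \<open>x6\<close>, and the inequality follows by raising one coordinate at a time.\<close>

lemma has_real_derivative_affine_div_sqrt_quadratic:
  fixes p q r s t :: real
  assumes pos: "0 < t\<^sup>2 + 2*r*t + s"
  shows "((\<lambda>t. (p*t + q) / sqrt (t\<^sup>2 + 2*r*t + s)) has_real_derivative
           ((p*r - q)*t + p*s - q*r) / ((t\<^sup>2 + 2*r*t + s) * sqrt (t\<^sup>2 + 2*r*t + s))) (at t)"
proof -
  define g where "g = t\<^sup>2 + 2*r*t + s"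
  have "((\<lambda>t. (p*t + q) / sqrt (t\<^sup>2 + 2*r*t + s)) has_real_derivative
           (p * sqrt g - (p*t + q) * ((2*t + 2*r) / (2 * sqrt g))) / (sqrt g)\<^sup>2) (at t)"
    using pos unfolding g_def by (auto intro!: derivative_eq_intros simp: divide_simps)
  moreover have "(p * sqrt g - (p*t + q) * ((2*t + 2*r) / (2 * sqrt g))) / (sqrt g)\<^sup>2
      = ((p*r - q)*t + p*s - q*r) / (g * sqrt g)"
  proof -
    have "g > 0" "sqrt g * sqrt g = g" using pos by (simp_all add: g_def)
    then show ?thesis by (simp add: field_simps power2_eq_square) (simp add: g_def algebra_simps power2_eq_square)
  qed
  ultimately show ?thesis unfolding g_def by (rule DERIV_cong)
qed

lemma phi_has_real_derivative_x2:
  fixes x1 x2 x3 x4 x5 x6 :: real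
  defines "R \<equiv> 2*x1*x2*x6 + x1\<^sup>2 + x2\<^sup>2 + x6\<^sup>2 - 1"
  assumes "0 < R"
  shows "((\<lambda>t. phi x1 t x3 x4 x5 x6) has_real_derivative
     (x1\<^sup>2 - 1) * (x5*(x2*x6 + x1) + x4*(x1*x6 + x2) - x3*(x6\<^sup>2 - 1))
       / (R * sqrt R * sqrt (2*x1*x3*x5 + x1\<^sup>2 + x3\<^sup>2 + x5\<^sup>2 - 1))) (at x2)"
proof -
  define p where "p = x3 + x1*x5"
  define q where "q = x5*x6 + x1*x3*x6 - x1\<^sup>2*x4 + x4"
  define r where "r = x1*x6"
  define s where "s = x1\<^sup>2 + x6\<^sup>2 - 1"
  define c where "c = sqrt (2*x1*x3*x5 + x1\<^sup>2 + x3\<^sup>2 + x5\<^sup>2 - 1)"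
  have R_eq: "R = x2\<^sup>2 + 2*r*x2 + s"
    by (simp add: R_def r_def s_def algebra_simps)
  have phi_eq: "(\<lambda>t. phi x1 t x3 x4 x5 x6) = (\<lambda>t. (p*t + q) / sqrt (t\<^sup>2 + 2*r*t + s) / c)"
    by (simp add: phi_def p_def q_def r_def s_def c_def algebra_simps)
  have "(p*r - q)*x2 + p*s - q*r = (x1\<^sup>2 - 1) * (x5*(x2*x6 + x1) + x4*(x1*x6 + x2) - x3*(x6\<^sup>2 - 1))"
    by (simp add: p_def q_def r_def s_def algebra_simps power2_eq_square)
  then show ?thesis
    using DERIV_cdivide[OF has_real_derivative_affine_div_sqrt_quadratic, of x2 r s p q c] \<open>0 < R\<close>
    by (simp add: phi_eq R_eq c_def)
qed

lemma phi_radicand_pos: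
  fixes a b c :: real
  assumes "1 \<le> a" "0 \<le> b" "0 < c"
  shows "0 < 2*a*b*c + a\<^sup>2 + b\<^sup>2 + c\<^sup>2 - 1"
proof -
  have "1 \<le> a\<^sup>2" using assms(1) by (simp add: one_le_power)
  moreover have "0 \<le> 2*a*b*c" using assms by simp
  moreover have "0 < c\<^sup>2" using assms(3) by simp
  ultimately show ?thesis by (smt (verit) zero_le_power2)
qed

lemma phi_x2_numerator_nonneg:
  fixes x1 x2 x3 x4 x5 x6 :: real
  assumes "1 \<le> x1" "1 \<le> x2" "x3 \<le> 2" "1 \<le> x4" "1 \<le> x5" "1 \<le> x6" "x6 \<le> 2"
  shows "0 \<le> x5*(x2*x6 + x1) + x4*(x1*x6 + x2) - x3*(x6\<^sup>2 - 1)"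
proof -
  have "x6 \<le> x2*x6" "x6 \<le> x1*x6"
    using assms by (simp_all add: mult_le_cancel_right1)
  moreover have "0 \<le> x2*x6 + x1" "0 \<le> x1*x6 + x2"
    using assms by auto
  ultimately have "x2*x6 + x1 \<le> x5*(x2*x6 + x1)" "x1*x6 + x2 \<le> x4*(x1*x6 + x2)"
    using assms mult_right_mono[of 1 x5 "x2*x6 + x1"] mult_right_mono[of 1 x4 "x1*x6 + x2"] by auto
  then have "x6 + 1 \<le> x5*(x2*x6 + x1)" "x6 + 1 \<le> x4*(x1*x6 + x2)"
    using \<open>x6 \<le> x2*x6\<close> \<open>x6 \<le> x1*x6\<close> assms by linarith+
  moreover have "x3*(x6\<^sup>2 - 1) \<le> 2*(x6 + 1)"
  proof -
    have "0 \<le> x6\<^sup>2 - 1" using assms by (simp add: one_le_power)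
    then have "x3*(x6\<^sup>2 - 1) \<le> 2*(x6\<^sup>2 - 1)" using assms(3) by (intro mult_right_mono)
    also have "\<dots> = (x6 - 1) * (2*(x6 + 1))" by (simp add: algebra_simps power2_eq_square)
    also have "\<dots> \<le> 2*(x6 + 1)" using assms by (intro mult_left_le_one_le) auto
    finally show ?thesis .
  qed
  ultimately show ?thesis by argo
qed

lemma phi_deriv_x2_nonneg:
  fixes x1 x2 x3 x4 x5 x6 :: real
  assumes "x1 \<in> {1..2}" "x2 \<in> {1..2}" "x3 \<in> {1..2}"
      and "x4 \<in> {1..2}" "x5 \<in> {1..2}" "x6 \<in> {1..2}"
  shows "\<exists>D. ((\<lambda>t. phi x1 t x3 x4 x5 x6) has_real_derivative D) (at x2) \<and> 0 \<le> D"
proof -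
  have R2: "0 < 2*x1*x2*x6 + x1\<^sup>2 + x2\<^sup>2 + x6\<^sup>2 - 1"
   and R3: "0 < 2*x1*x3*x5 + x1\<^sup>2 + x3\<^sup>2 + x5\<^sup>2 - 1"
    using assms by (intro phi_radicand_pos; simp)+
  have "0 \<le> x1\<^sup>2 - 1" using assms by (simp add: one_le_power)
  moreover have "0 \<le> x5*(x2*x6 + x1) + x4*(x1*x6 + x2) - x3*(x6\<^sup>2 - 1)"
    using assms by (intro phi_x2_numerator_nonneg) auto
  ultimately show ?thesis
    using phi_has_real_derivative_x2[OF R2, of x3 x4 x5] R2 R3 by (fastforce intro: divide_nonneg_pos)
qed

lemma phi_swap_23_65: "phi x1 x2 x3 x4 x5 x6 = phi x1 x3 x2 x4 x6 x5"
  unfolding phi_def by (simp add: algebra_simps)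

lemma phi_swap_26_35: "phi x1 x2 x3 x4 x5 x6 = phi x1 x6 x5 x4 x3 x2"
  unfolding phi_def by (simp add: algebra_simps)

lemma phi_mono_x2:
  fixes x1 x2 x3 x4 x5 x6 k :: real
  assumes "x1 \<in> {1..2}" "x2 \<in> {1..2}" "x3 \<in> {1..2}"
      and "x4 \<in> {1..2}" "x5 \<in> {1..2}" "x6 \<in> {1..2}" "k \<in> {x2..2}"
  shows "phi x1 x2 x3 x4 x5 x6 \<le> phi x1 k x3 x4 x5 x6"
  using assms by (intro DERIV_nonneg_imp_nondecreasing[where f = "\<lambda>t. phi x1 t x3 x4 x5 x6"])
    (auto intro!: phi_deriv_x2_nonneg)

theorem lemma3p4:
  fixes x1 x2 x3 x4 x5 x6 :: real
  assumes "x1 \<in> {1..2}" "x2 \<in> {1..2}" "x3 \<in> {1..2}"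
      and "x4 \<in> {1..2}" "x5 \<in> {1..2}" "x6 \<in> {1..2}"
  shows "(\<exists>D. ((\<lambda>t. phi x1 t x3 x4 x5 x6) has_real_derivative D) (at x2) \<and> D \<ge> 0)
       \<and> (\<exists>D. ((\<lambda>t. phi x1 x2 t x4 x5 x6) has_real_derivative D) (at x3) \<and> D \<ge> 0)
       \<and> (\<exists>D. ((\<lambda>t. phi x1 x2 x3 x4 t x6) has_real_derivative D) (at x5) \<and> D \<ge> 0)
       \<and> (\<exists>D. ((\<lambda>t. phi x1 x2 x3 x4 x5 t) has_real_derivative D) (at x6) \<and> D \<ge> 0)
       \<and> (\<forall>k2 k3 k5 k6. k2 \<in> {x2..2} \<longrightarrow> k3 \<in> {x3..2} \<longrightarrow> k5 \<in> {x5..2} \<longrightarrow> k6 \<in> {x6..2} \<longrightarrow>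
            phi x1 x2 x3 x4 x5 x6 \<le> phi x1 k2 k3 x4 k5 k6)"
proof (intro conjI allI impI)
  have "(\<lambda>t. phi x1 x2 t x4 x5 x6) = (\<lambda>t. phi x1 t x2 x4 x6 x5)"
       "(\<lambda>t. phi x1 x2 x3 x4 t x6) = (\<lambda>t. phi x1 t x6 x4 x2 x3)"
       "(\<lambda>t. phi x1 x2 x3 x4 x5 t) = (\<lambda>t. phi x1 t x5 x4 x3 x2)"
    by (metis phi_swap_23_65 phi_swap_26_35)+
  then show "\<exists>D. ((\<lambda>t. phi x1 t x3 x4 x5 x6) has_real_derivative D) (at x2) \<and> D \<ge> 0"
    and "\<exists>D. ((\<lambda>t. phi x1 x2 t x4 x5 x6) has_real_derivative D) (at x3) \<and> D \<ge> 0"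
    and "\<exists>D. ((\<lambda>t. phi x1 x2 x3 x4 t x6) has_real_derivative D) (at x5) \<and> D \<ge> 0"
    and "\<exists>D. ((\<lambda>t. phi x1 x2 x3 x4 x5 t) has_real_derivative D) (at x6) \<and> D \<ge> 0"
    using assms by (auto intro!: phi_deriv_x2_nonneg)
  fix k2 k3 k5 k6
  assume k: "k2 \<in> {x2..2}" "k3 \<in> {x3..2}" "k5 \<in> {x5..2}" "k6 \<in> {x6..2}"
  have "phi x1 x2 x3 x4 x5 x6 \<le> phi x1 k2 x3 x4 x5 x6"
    using assms k by (intro phi_mono_x2) auto
  also have "\<dots> = phi x1 x3 k2 x4 x6 x5" by (rule phi_swap_23_65)
  also have "\<dots> \<le> phi x1 k3 k2 x4 x6 x5" using assms k by (intro phi_mono_x2) auto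
  also have "\<dots> = phi x1 x5 x6 x4 k2 k3" by (metis phi_swap_23_65 phi_swap_26_35)
  also have "\<dots> \<le> phi x1 k5 x6 x4 k2 k3" using assms k by (intro phi_mono_x2) auto
  also have "\<dots> = phi x1 x6 k5 x4 k3 k2" by (rule phi_swap_23_65)
  also have "\<dots> \<le> phi x1 k6 k5 x4 k3 k2" using assms k by (intro phi_mono_x2) auto
  also have "\<dots> = phi x1 k2 k3 x4 k5 k6" by (rule phi_swap_26_35[symmetric])
  finally show "phi x1 x2 x3 x4 x5 x6 \<le> phi x1 k2 k3 x4 k5 k6" .
qed

end
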